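(* Let $4/3\le p\le\sqrt2$, and put $$u=\frac{6p^2}{4-p^2},\quad v=2,\quad a=\frac{3p^3}{4-p^2},\quad b=\frac{5p}{2},\quad c=\frac p2.$$ Define $F(z)=|u+vz|-|a+bz-cz^2|$. Then $F(z)\le F(-|z|)$ for all $z$ with $|z|\le1$. *)

theory Defs
  imports Complex_Main
begin

definition F8 :: "real \<Rightarrow> complex \<Rightarrow> real" where
  "F8 p z = (let u = 6 * p^2 / (4 - p^2); v = 2; a = 3 * p^3 / (4 - p^2);
                 b = 5 * p / 2; c = p / 2
             in cmod (complex_of_real u + complex_of_real v * z)
                - cmod (complex_of_real a + complex_of_real b * z - complex_of_real c * z^2))"

end

theory Submission
  imports Defs
begin

text \<open>With \<open>m = 3p\<^sup>2/(4 - p\<^sup>2) \<ge> 12/5\<close> and \<open>k = p/2 \<ge> 2/3\<close> one has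
  \<open>F(z) = 2S - kT\<close> where \<open>S = |z + m|\<close>, \<open>T = |z\<^sup>2 - 5z - 2m|\<close>, while \<open>F(-r) = 2S\<^sub>0 - kT\<^sub>0\<close> with
  \<open>r = |z|\<close>, \<open>S\<^sub>0 = m - r\<close>, \<open>T\<^sub>0 = |r\<^sup>2 + 5r - 2m|\<close>. Putting \<open>x = Re z\<close>, both squares grow by a
  multiple of \<open>x + r \<ge> 0\<close>: \<open>S\<^sup>2 - S\<^sub>0\<^sup>2 = 2m(x + r)\<close> and \<open>T\<^sup>2 - T\<^sub>0\<^sup>2 = N(x + r)\<close> with
  \<open>N = 20m - 10r\<^sup>2 + 8m(r - x) > 0\<close>. Dividing by \<open>S + S\<^sub>0\<close> and \<open>T + T\<^sub>0\<close>, it suffices that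
  \<open>4m(T + T\<^sub>0) \<le> kN(S + S\<^sub>0)\<close>. Here \<open>T + T\<^sub>0 \<le> 2 max(r\<^sup>2 + 5r, 2m)\<close> by the triangle inequality,
  \<open>S + S\<^sub>0 \<ge> 2m - r + x\<close>, and \<open>N(2m - r + x)\<close> is a concave quadratic in \<open>x\<close>, so the required
  lower bound only has to be checked at \<open>x = \<plusminus>r\<close>.\<close>

definition reduced_F8 :: "real \<Rightarrow> real \<Rightarrow> complex \<Rightarrow> real" where
  "reduced_F8 m k z = 2 * cmod (z + of_real m) - k * cmod (z\<^sup>2 - 5 * z - of_real (2 * m))"

lemma F8_eq_reduced_F8:
  assumes "0 \<le> p" "p\<^sup>2 \<noteq> 4"
  shows "F8 p z = reduced_F8 (3 * p\<^sup>2 / (4 - p\<^sup>2)) (p / 2) z"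
proof -
  define m where "m = 3 * p\<^sup>2 / (4 - p\<^sup>2)"
  have u: "6 * p\<^sup>2 / (4 - p\<^sup>2) = 2 * m"
    unfolding m_def by simp
  have a: "3 * p ^ 3 / (4 - p\<^sup>2) = p / 2 * (2 * m)"
    using assms(2) unfolding m_def by (simp add: field_simps power3_eq_cube power2_eq_square)
  have "of_real (3 * p ^ 3 / (4 - p\<^sup>2)) + of_real (5 * p / 2) * z - of_real (p / 2) * z\<^sup>2
      = - (of_real (p / 2) * (z\<^sup>2 - 5 * z - of_real (2 * m)))"
    unfolding a by (simp add: algebra_simps)
  moreover have "of_real (6 * p\<^sup>2 / (4 - p\<^sup>2)) + of_real 2 * z = 2 * (z + of_real m)"
    unfolding u by simp
  ultimately show ?thesis
    using assms(1) unfolding F8_def reduced_F8_def Let_def m_def[symmetric]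
    by (simp only: norm_minus_cancel norm_mult norm_of_real) simp
qed

lemma reduced_F8_neg_of_real:
  assumes "r \<le> m"
  shows "reduced_F8 m k (- of_real r) = 2 * (m - r) - k * \<bar>r\<^sup>2 + 5 * r - 2 * m\<bar>"
proof -
  have "- of_real r + of_real m = (of_real (m - r) :: complex)" by simp
  moreover have "(- of_real r)\<^sup>2 - 5 * (- of_real r) - of_real (2 * m)
      = (of_real (r\<^sup>2 + 5 * r - 2 * m) :: complex)" by simp
  ultimately show ?thesis
    using assms unfolding reduced_F8_def by (simp only: norm_of_real)
qed

lemma cmod_add_of_real_sq:
  "(cmod (z + of_real m))\<^sup>2 = (m - cmod z)\<^sup>2 + 2 * m * (Re z + cmod z)"
proof -
  have r2: "(cmod z)\<^sup>2 = (Re z)\<^sup>2 + (Im z)\<^sup>2" by (simp add: cmod_power2)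
  show ?thesis
    unfolding cmod_power2[of "z + of_real m"] power2_diff r2
    by (simp add: power2_eq_square algebra_simps)
qed

lemma cmod_quadratic_sq:
  "(cmod (z\<^sup>2 - 5 * z - of_real (2 * m)))\<^sup>2
     = ((cmod z)\<^sup>2 + 5 * cmod z - 2 * m)\<^sup>2
       + (Re z + cmod z) * (20 * m - 10 * (cmod z)\<^sup>2 + 8 * m * cmod z - 8 * m * Re z)"
proof -
  define r x where "r = cmod z" and "x = Re z"
  have Im_sq: "(Im z)\<^sup>2 = r\<^sup>2 - x\<^sup>2"
    unfolding r_def x_def by (simp add: cmod_power2)
  have "(cmod (z\<^sup>2 - 5 * z - of_real (2 * m)))\<^sup>2
      = (x\<^sup>2 - (Im z)\<^sup>2 - 5 * x - 2 * m)\<^sup>2 + (Im z)\<^sup>2 * (2 * x - 5)\<^sup>2"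
    unfolding cmod_power2 x_def by (simp add: power2_eq_square algebra_simps)
  also have "\<dots> = (r\<^sup>2 + 5 * r - 2 * m)\<^sup>2 + (x + r) * (20 * m - 10 * r\<^sup>2 + 8 * m * r - 8 * m * x)"
    unfolding Im_sq by (simp add: power2_eq_square algebra_simps)
  finally show ?thesis
    unfolding r_def x_def .
qed

lemma scaled_diff_le_of_sq_diff:
  fixes a a\<^sub>0 b b\<^sub>0 c d y \<alpha> \<beta> :: real
  assumes "0 \<le> a" "0 < a\<^sub>0" "0 \<le> b" "0 \<le> b\<^sub>0" "0 \<le> y" "0 < d"
    and a_sq: "a\<^sup>2 = a\<^sub>0\<^sup>2 + c * y" and b_sq: "b\<^sup>2 = b\<^sub>0\<^sup>2 + d * y"
    and "\<alpha> * c * (b + b\<^sub>0) \<le> \<beta> * d * (a + a\<^sub>0)"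
  shows "\<alpha> * (a - a\<^sub>0) \<le> \<beta> * (b - b\<^sub>0)"
proof (cases "b + b\<^sub>0 = 0")
  case True
  then have "b = 0" "b\<^sub>0 = 0" using assms(3,4) by auto
  then have "y = 0" using b_sq \<open>0 < d\<close> by simp
  then have "a = a\<^sub>0" using a_sq assms(1,2) by (simp add: power2_eq_iff_nonneg)
  with \<open>b = 0\<close> \<open>b\<^sub>0 = 0\<close> show ?thesis by simp
next
  case False
  then have pos: "0 < (a + a\<^sub>0) * (b + b\<^sub>0)" using assms(1-4) by simp
  have a_diff: "(a + a\<^sub>0) * (a - a\<^sub>0) = c * y" and b_diff: "(b + b\<^sub>0) * (b - b\<^sub>0) = d * y"
    using a_sq b_sq by (simp_all add: power2_eq_square algebra_simps)
  have "(a + a\<^sub>0) * (b + b\<^sub>0) * (\<alpha> * (a - a\<^sub>0)) = y * (\<alpha> * c * (b + b\<^sub>0))"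
    using a_diff by (metis mult.commute mult.left_commute)
  also have "\<dots> \<le> y * (\<beta> * d * (a + a\<^sub>0))"
    using assms(9,5) by (rule mult_left_mono)
  also have "\<dots> = (a + a\<^sub>0) * (b + b\<^sub>0) * (\<beta> * (b - b\<^sub>0))"
    using b_diff by (metis mult.commute mult.left_commute)
  finally show ?thesis
    using pos by (simp add: mult_le_cancel_left_pos)
qed

lemma affine_product_ge_endpoints:
  fixes a b t c d q K :: real
  assumes "0 \<le> q" "a \<le> t" "t \<le> b"
    and "K \<le> (c - q * a) * (d + a)" and "K \<le> (c - q * b) * (d + b)"
  shows "K \<le> (c - q * t) * (d + t)"
proof (cases "a = b")
  case True
  with assms show ?thesis by simp
next
  case False
  then have "0 < b - a" using assms(2,3) by simp
  have "(b - a) * ((c - q * t) * (d + t))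
      = (b - t) * ((c - q * a) * (d + a)) + (t - a) * ((c - q * b) * (d + b))
        + q * (b - a) * (t - a) * (b - t)"
    by (simp add: algebra_simps)
  also have "\<dots> \<ge> (b - t) * K + (t - a) * K"
    using assms by (intro add_increasing2 add_mono mult_left_mono) auto
  finally have "(b - a) * K \<le> (b - a) * ((c - q * t) * (d + t))"
    by (simp add: algebra_simps)
  with \<open>0 < b - a\<close> show ?thesis by simp
qed

lemma product_lower_bound_at_neg:
  fixes m r :: real
  assumes "12/5 \<le> m" "0 \<le> r" "r \<le> 1"
  shows "12 * m * max (r\<^sup>2 + 5 * r) (2 * m) \<le> (20 * m - 10 * r\<^sup>2 + 16 * m * r) * (2 * m - 2 * r)"
proof -
  have "12/5 * (m * r) \<le> m * (m * r)"
    using assms by (intro mult_right_mono) auto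
  then have "12/5 * (m * r) \<le> m * m * r" "m * r * r \<le> m * r" "m * r \<le> m"
    "12/5 * m \<le> m * m" "0 \<le> r * r * r"
    using assms by (simp_all add: mult_left_le mult_right_mono mult.assoc)
  then have "0 \<le> 20 * m * m + 16 * m * m * r - 50 * m * r - 32 * m * r * r + 10 * r * r * r"
    and "0 \<le> 8 * m * m + 16 * m * m * r - 20 * m * r - 26 * m * r * r + 10 * r * r * r"
    using assms by linarith+
  moreover have "(20 * m - 10 * r\<^sup>2 + 16 * m * r) * (2 * m - 2 * r) - 12 * m * (r\<^sup>2 + 5 * r)
      = 2 * (20 * m * m + 16 * m * m * r - 50 * m * r - 32 * m * r * r + 10 * r * r * r)"
    and "(20 * m - 10 * r\<^sup>2 + 16 * m * r) * (2 * m - 2 * r) - 12 * m * (2 * m)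
      = 2 * (8 * m * m + 16 * m * m * r - 20 * m * r - 26 * m * r * r + 10 * r * r * r)"
    by (simp_all add: power2_eq_square algebra_simps)
  ultimately show ?thesis
    by (simp add: max_def)
qed

lemma product_lower_bound:
  fixes m r x :: real
  assumes "12/5 \<le> m" "0 \<le> r" "r \<le> 1" "\<bar>x\<bar> \<le> r"
  shows "12 * m * max (r\<^sup>2 + 5 * r) (2 * m)
           \<le> (20 * m - 10 * r\<^sup>2 + 8 * m * r - 8 * m * x) * (2 * m - r + x)"
proof (rule affine_product_ge_endpoints[where a = "- r" and b = r])
  show "12 * m * max (r\<^sup>2 + 5 * r) (2 * m)
          \<le> (20 * m - 10 * r\<^sup>2 + 8 * m * r - 8 * m * - r) * (2 * m - r + - r)"
    using product_lower_bound_at_neg[OF assms(1-3)] by (simp add: algebra_simps)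
  have "r\<^sup>2 \<le> 1" using assms(2,3) by (simp add: power_le_one)
  then have "6 * max (r\<^sup>2 + 5 * r) (2 * m) \<le> 20 * m - 10 * r\<^sup>2"
    using assms by (simp add: max_def)
  then show "12 * m * max (r\<^sup>2 + 5 * r) (2 * m)
               \<le> (20 * m - 10 * r\<^sup>2 + 8 * m * r - 8 * m * r) * (2 * m - r + r)"
    using assms(1) by (simp add: mult_left_mono)
qed (use assms in auto)

lemma reduced_F8_le_at_neg_norm:
  fixes m k :: real and z :: complex
  assumes m: "12/5 \<le> m" and k: "2/3 \<le> k" and "cmod z \<le> 1"
  shows "reduced_F8 m k z \<le> reduced_F8 m k (- of_real (cmod z))"
proof -
  define r x where "r = cmod z" and "x = Re z"
  define S T where "S = cmod (z + of_real m)" and "T = cmod (z\<^sup>2 - 5 * z - of_real (2 * m))"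
  define S\<^sub>0 T\<^sub>0 where "S\<^sub>0 = m - r" and "T\<^sub>0 = \<bar>r\<^sup>2 + 5 * r - 2 * m\<bar>"
  define N where "N = 20 * m - 10 * r\<^sup>2 + 8 * m * r - 8 * m * x"
  have r: "0 \<le> r" "r \<le> 1" "\<bar>x\<bar> \<le> r"
    using assms(3) abs_Re_le_cmod[of z] unfolding r_def x_def by auto
  have "r\<^sup>2 \<le> 1"
    using r by (simp add: power_le_one)
  have "0 \<le> m * (r - x)"
    using m r by simp
  moreover have "N = 20 * m - 10 * r\<^sup>2 + 8 * (m * (r - x))"
    unfolding N_def by (simp add: algebra_simps)
  ultimately have N_pos: "0 < N"
    using m \<open>r\<^sup>2 \<le> 1\<close> by linarith
  have S_sq: "S\<^sup>2 = S\<^sub>0\<^sup>2 + 2 * m * (x + r)"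
    unfolding S_def S\<^sub>0_def r_def x_def cmod_add_of_real_sq by (simp add: add.commute)
  have T_sq: "T\<^sup>2 = T\<^sub>0\<^sup>2 + N * (x + r)"
    unfolding T_def T\<^sub>0_def N_def r_def x_def cmod_quadratic_sq by (simp add: mult.commute)
  have S_ge: "2 * m - r + x \<le> S + S\<^sub>0"
    using abs_Re_le_cmod[of "z + of_real m"] unfolding S_def S\<^sub>0_def x_def by simp
  have "T \<le> cmod (z\<^sup>2) + cmod (5 * z) + cmod (of_real (2 * m) :: complex)"
    unfolding T_def by (meson norm_triangle_ineq4 add_right_mono order_trans)
  then have "T \<le> r\<^sup>2 + 5 * r + 2 * m"
    using m unfolding r_def by (simp add: norm_mult norm_power)
  then have T_le: "T + T\<^sub>0 \<le> 2 * max (r\<^sup>2 + 5 * r) (2 * m)"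
    unfolding T\<^sub>0_def by (simp add: max_def abs_if)
  have "2 * (2 * m) * (T + T\<^sub>0) \<le> 2 * (2 * m) * (2 * max (r\<^sup>2 + 5 * r) (2 * m))"
    using T_le m by (intro mult_left_mono) auto
  also have "\<dots> = 2/3 * (12 * m * max (r\<^sup>2 + 5 * r) (2 * m))"
    by simp
  also have "\<dots> \<le> 2/3 * (N * (2 * m - r + x))"
    using product_lower_bound[OF m r] unfolding N_def by linarith
  also have "\<dots> \<le> k * (N * (2 * m - r + x))"
    using k N_pos r m by (intro mult_right_mono) auto
  also have "\<dots> \<le> k * N * (S + S\<^sub>0)"
    using S_ge k N_pos by (simp add: mult_left_mono)
  finally have "2 * (S - S\<^sub>0) \<le> k * (T - T\<^sub>0)"
    using m r N_pos S_sq T_sq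
    by (intro scaled_diff_le_of_sq_diff[where c = "2 * m" and d = N and y = "x + r"])
       (auto simp: S_def T_def S\<^sub>0_def T\<^sub>0_def)
  moreover have "reduced_F8 m k (- of_real (cmod z)) = 2 * S\<^sub>0 - k * T\<^sub>0"
    using reduced_F8_neg_of_real[of r m k] m r unfolding S\<^sub>0_def T\<^sub>0_def r_def by simp
  ultimately show ?thesis
    unfolding reduced_F8_def S_def T_def by (simp add: algebra_simps)
qed

theorem lemma8:
  fixes p :: real and z :: complex
  assumes "4/3 \<le> p" and "p \<le> sqrt 2" and "cmod z \<le> 1"
  shows "F8 p z \<le> F8 p (- complex_of_real (cmod z))"
proof -
  have "0 \<le> p" using assms(1) by simp
  have "p\<^sup>2 \<le> 2"
    using power_mono[OF assms(2) \<open>0 \<le> p\<close>, of 2] by simp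
  have "(4/3)\<^sup>2 \<le> p\<^sup>2"
    using assms(1) by (intro power_mono) auto
  then have "12/5 \<le> 3 * p\<^sup>2 / (4 - p\<^sup>2)"
    using \<open>p\<^sup>2 \<le> 2\<close> by (simp add: pos_le_divide_eq power2_eq_square)
  moreover have "2/3 \<le> p / 2"
    using assms(1) by simp
  ultimately show ?thesis
    using reduced_F8_le_at_neg_norm[OF _ _ assms(3)] F8_eq_reduced_F8 \<open>0 \<le> p\<close> \<open>p\<^sup>2 \<le> 2\<close>
    by simp
qed

end
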